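(* Let $\mathcal{T}$ be a finite set and let $\mathbf{p},\mathbf{q}$ be probability measures on $\mathcal{T}$. Write $\mathbf{h}_{\mathbf{p},\mathbf{q}}(x) = \mathbf{q}(x) - \mathbf{p}(x)$. Let $\prec$ be any strict total order on $\mathcal{T}$ such that $\mathbf{h}_{\mathbf{p},\mathbf{q}}(x) > \mathbf{h}_{\mathbf{p},\mathbf{q}}(x')$ implies $x \prec x'$ and $\mathbf{h}_{\mathbf{p},\mathbf{q}}(x) < \mathbf{h}_{\mathbf{p},\mathbf{q}}(x')$ implies $x' \prec x$. Let $X_\mathbf{p} \sim \mathbf{p}$ and $Y_\mathbf{q} \sim \mathbf{q}$ be independent and define $R_{\mathbf{p},\mathbf{q}}$ to be $0$ if $Y_\mathbf{q} \prec X_\mathbf{p}$, $1$ if $X_\mathbf{p} \prec Y_\mathbf{q}$, and an independent $\mathrm{Bernoulli}(1/2)$ random variable if $X_\mathbf{p} = Y_\mathbf{q}$. Then $$\Pr[R_{\mathbf{p},\mathbf{q}} = 0] \ge \frac12 + \frac12\Big(\max_{x\in\mathcal{T}} \mathbf{h}_{\mathbf{p},\mathbf{q}}(x)\Big)^2.$$ *)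

theory Defs
  imports "HOL-Probability.Probability"
begin

definition hpq :: "'a pmf \<Rightarrow> 'a pmf \<Rightarrow> 'a \<Rightarrow> real" where
  "hpq p q x = pmf q x - pmf p x"

text \<open>Distribution of R_{p,q}: X ~ p, Y ~ q independent, and an independent fair coin
  used to break ties. The strict order is given as a relation r, (x,y) in r meaning x precedes y.\<close>
definition R_pmf :: "('a \<times> 'a) set \<Rightarrow> 'a pmf \<Rightarrow> 'a pmf \<Rightarrow> nat pmf" where
  "R_pmf r p q =
     bind_pmf p (\<lambda>X. bind_pmf q (\<lambda>Y. bind_pmf (bernoulli_pmf (1/2)) (\<lambda>B.
       return_pmf (if (Y, X) \<in> r then 0 else if (X, Y) \<in> r then 1
                   else (if B then 1 else 0)))))"

end

theory Submission
  imports Defs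
begin

text \<open>
  Write \<open>h = q - p\<close> and \<open>\<sigma>(x, y) = [y \<prec> x] - [x \<prec> y]\<close>. Breaking ties fairly gives
  \<open>Pr[R = 0] = 1/2 + D/2\<close> with \<open>D = \<Sum>\<^sub>x\<^sub>,\<^sub>y p(x) q(y) \<sigma>(x, y)\<close>. As \<open>\<sigma>\<close> is antisymmetric,
  replacing first \<open>q\<close> by \<open>h\<close> and then \<open>p\<close> by \<open>q\<close> does not change \<open>D\<close>, which becomes
  \<open>\<Sum>\<^sub>x q(x) (2 H(x) + h(x))\<close> with \<open>H(x) = \<Sum>\<^sub>y\<^sub>\<prec>\<^sub>x h(y)\<close>. Because the order lists \<open>h\<close> in
  decreasing order and \<open>h\<close> sums to 0, all prefix sums of \<open>h\<close> are nonnegative, so every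
  summand is nonnegative, and the summand at a maximiser \<open>x\<^sub>0\<close> of \<open>h\<close> is at least
  \<open>q(x\<^sub>0) h(x\<^sub>0) \<ge> h(x\<^sub>0)\<^sup>2\<close>.
\<close>

definition order_sign :: "('a \<times> 'a) set \<Rightarrow> 'a \<Rightarrow> 'a \<Rightarrow> real" where
  "order_sign r x y = of_bool ((y, x) \<in> r) - of_bool ((x, y) \<in> r)"

lemma order_sign_swap: "order_sign r y x = - order_sign r x y"
  unfolding order_sign_def by simp

lemma prob_R_pmf_0:
  assumes T: "finite T" and p: "set_pmf p \<subseteq> T" and q: "set_pmf q \<subseteq> T"
  shows "measure_pmf.prob (R_pmf r p q) {0} =
    (\<Sum>x\<in>T. \<Sum>y\<in>T. pmf p x * pmf q y *
       (if (y, x) \<in> r then 1 else if (x, y) \<in> r then 0 else 1/2))"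
proof -
  have expectation_sum: "measure_pmf.expectation M f = (\<Sum>a\<in>T. f a * pmf M a)"
    if "set_pmf M \<subseteq> T" for M and f :: "'a \<Rightarrow> real"
    using T that by (intro integral_measure_pmf_real) auto
  show ?thesis
    unfolding measure_pmf_single R_pmf_def pmf_bind
    using p q
    by (simp add: expectation_sum sum_distrib_left mult_ac indicator_def) (intro sum.cong refl; simp)
qed

lemma prob_R_pmf_0_order_sign:
  assumes T: "finite T" and p: "set_pmf p \<subseteq> T" and q: "set_pmf q \<subseteq> T"
    and r: "strict_linear_order_on T r"
  shows "measure_pmf.prob (R_pmf r p q) {0} =
    1/2 + (\<Sum>x\<in>T. \<Sum>y\<in>T. pmf p x * pmf q y * order_sign r x y) / 2"
proof -
  have tie: "(if (y, x) \<in> r then 1 else if (x, y) \<in> r then 0 else 1/2)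
      = 1/2 + order_sign r x y / 2" if "x \<in> T" "y \<in> T" for x y
    using r that unfolding strict_linear_order_on_def order_sign_def
    by (auto simp: irrefl_def total_on_def dest: transD)
  have "measure_pmf.prob (R_pmf r p q) {0} =
      (\<Sum>x\<in>T. \<Sum>y\<in>T. pmf p x * pmf q y / 2 + pmf p x * pmf q y * order_sign r x y / 2)"
    unfolding prob_R_pmf_0[OF T p q] by (intro sum.cong refl) (simp add: tie algebra_simps)
  also have "\<dots> = (\<Sum>x\<in>T. pmf p x * (\<Sum>y\<in>T. pmf q y)) / 2
      + (\<Sum>x\<in>T. \<Sum>y\<in>T. pmf p x * pmf q y * order_sign r x y) / 2"
    by (simp add: sum.distrib sum_divide_distrib sum_distrib_left)
  finally show ?thesis
    using sum_pmf_eq_1[OF T p] sum_pmf_eq_1[OF T q] by (simp add: sum_distrib_right[symmetric])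
qed

lemma sum_sum_antisym_eq_0:
  fixes f :: "'a \<Rightarrow> real"
  assumes "\<And>x y. K y x = - K x y"
  shows "(\<Sum>x\<in>T. \<Sum>y\<in>T. f x * f y * K x y) = 0"
proof -
  let ?S = "\<Sum>x\<in>T. \<Sum>y\<in>T. f x * f y * K x y"
  have "?S = (\<Sum>y\<in>T. \<Sum>x\<in>T. f x * f y * K x y)" by (rule sum.swap)
  also have "\<dots> = (\<Sum>y\<in>T. \<Sum>x\<in>T. - (f y * f x * K y x))"
    by (intro sum.cong refl) (metis assms mult.commute mult_minus_right)
  also have "\<dots> = - ?S" by (simp add: sum_negf)
  finally show ?thesis by linarith
qed

lemma sum_order_sign_eq:
  fixes h :: "'a \<Rightarrow> real"
  assumes T: "finite T" and r: "strict_linear_order_on T r" and x: "x \<in> T"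
  shows "(\<Sum>y\<in>T. h y * order_sign r x y)
    = 2 * sum h {y\<in>T. (y, x) \<in> r} + h x - sum h T"
proof -
  let ?below = "{y\<in>T. (y, x) \<in> r}" and ?above = "{y\<in>T. (x, y) \<in> r}"
  have irr: "(x, x) \<notin> r" and disjoint: "?below \<inter> ?above = {}"
    using r unfolding strict_linear_order_on_def irrefl_def by (auto dest: transD)
  have split: "insert x (?below \<union> ?above) = T"
    using r x unfolding strict_linear_order_on_def total_on_def by auto
  have "sum h (insert x (?below \<union> ?above)) = h x + (sum h ?below + sum h ?above)"
    using T irr disjoint by (simp add: sum.union_disjoint)
  then have "sum h T = sum h ?below + h x + sum h ?above"
    unfolding split by simp
  moreover have "(\<Sum>y\<in>T. h y * order_sign r x y) = sum h ?below - sum h ?above"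
    using T unfolding order_sign_def
    by (simp add: right_diff_distrib sum_subtractf sum.inter_filter sum.inter_restrict)
  ultimately show ?thesis by simp
qed

lemma sum_sum_order_sign_eq_prefix_sums:
  fixes P Q :: "'a \<Rightarrow> real"
  assumes T: "finite T" and r: "strict_linear_order_on T r"
    and sum_eq: "sum P T = sum Q T"
  shows "(\<Sum>x\<in>T. \<Sum>y\<in>T. P x * Q y * order_sign r x y)
    = (\<Sum>x\<in>T. Q x * (2 * (\<Sum>y | y \<in> T \<and> (y, x) \<in> r. Q y - P y) + (Q x - P x)))"
proof -
  define h where "h y = Q y - P y" for y
  have sum_h: "sum h T = 0" using sum_eq by (simp add: h_def sum_subtractf)
  have "(\<Sum>x\<in>T. \<Sum>y\<in>T. P x * Q y * order_sign r x y)
      = (\<Sum>x\<in>T. \<Sum>y\<in>T. P x * P y * order_sign r x y + P x * h y * order_sign r x y)"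
    by (simp add: h_def algebra_simps)
  also have "\<dots> = (\<Sum>x\<in>T. \<Sum>y\<in>T. P x * h y * order_sign r x y)"
    using sum_sum_antisym_eq_0[of "order_sign r" P T, OF order_sign_swap] by (simp add: sum.distrib)
  also have "\<dots> = (\<Sum>x\<in>T. \<Sum>y\<in>T. Q x * h y * order_sign r x y - h x * h y * order_sign r x y)"
    by (simp add: h_def algebra_simps)
  also have "\<dots> = (\<Sum>x\<in>T. Q x * (\<Sum>y\<in>T. h y * order_sign r x y))"
    using sum_sum_antisym_eq_0[of "order_sign r" h T, OF order_sign_swap]
    by (simp add: sum_subtractf sum_distrib_left mult_ac)
  also have "\<dots> = (\<Sum>x\<in>T. Q x * (2 * sum h {y\<in>T. (y, x) \<in> r} + h x))"
    using sum_order_sign_eq[OF T r] sum_h by (intro sum.cong refl) simp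
  finally show ?thesis by (simp add: h_def)
qed

lemma sum_initial_segment_nonneg:
  fixes h :: "'a \<Rightarrow> real"
  assumes T: "finite T" and "S \<subseteq> T" and "sum h T = 0"
    and decreasing: "\<forall>x\<in>T. \<forall>x'\<in>T. h x < h x' \<longrightarrow> (x', x) \<in> r"
    and initial: "\<forall>x\<in>S. \<forall>z\<in>T. (z, x) \<in> r \<longrightarrow> z \<in> S"
  shows "sum h S \<ge> 0"
proof (cases "\<forall>x\<in>S. h x \<ge> 0")
  case True
  then show ?thesis by (simp add: sum_nonneg)
next
  case False
  then obtain x where x: "x \<in> S" "h x < 0" by auto
  have "h z \<le> 0" if z: "z \<in> T - S" for z
  proof (rule ccontr)
    assume "\<not> h z \<le> 0"
    then have "(z, x) \<in> r" using decreasing x z \<open>S \<subseteq> T\<close> by auto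
    then show False using initial x z by auto
  qed
  then have "sum h (T - S) \<le> 0" by (meson sum_nonpos)
  moreover have "sum h T = sum h S + sum h (T - S)"
    using T \<open>S \<subseteq> T\<close> by (metis add.commute sum.subset_diff)
  ultimately show ?thesis using \<open>sum h T = 0\<close> by linarith
qed

lemma square_le_sum_sum_order_sign:
  fixes P Q :: "'a \<Rightarrow> real"
  assumes T: "finite T" and r: "strict_linear_order_on T r"
    and nonneg: "\<forall>x\<in>T. P x \<ge> 0 \<and> Q x \<ge> 0" and sum_eq: "sum P T = sum Q T"
    and decreasing: "\<forall>x\<in>T. \<forall>x'\<in>T. Q x - P x < Q x' - P x' \<longrightarrow> (x', x) \<in> r"
    and x0: "x0 \<in> T" "Q x0 - P x0 \<ge> 0"
  shows "(Q x0 - P x0)\<^sup>2 \<le> (\<Sum>x\<in>T. \<Sum>y\<in>T. P x * Q y * order_sign r x y)"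
proof -
  define h where "h y = Q y - P y" for y
  define H where "H x = sum h {y\<in>T. (y, x) \<in> r}" for x
  have sum_h: "sum h T = 0" using sum_eq by (simp add: h_def sum_subtractf)
  have decreasing_h: "\<forall>x\<in>T. \<forall>x'\<in>T. h x < h x' \<longrightarrow> (x', x) \<in> r"
    using decreasing by (simp add: h_def)
  have trans: "trans r" and irr: "(x, x) \<notin> r" for x
    using r unfolding strict_linear_order_on_def irrefl_def by auto
  have H_nonneg: "H x \<ge> 0" for x
    unfolding H_def
    by (intro sum_initial_segment_nonneg[OF T _ sum_h decreasing_h]) (auto dest: transD[OF trans])
  have H_h_nonneg: "H x + h x \<ge> 0" if "x \<in> T" for x
  proof -
    have "H x + h x = sum h (insert x {y\<in>T. (y, x) \<in> r})"
      unfolding H_def using T irr by simp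
    also have "\<dots> \<ge> 0"
      using that
      by (intro sum_initial_segment_nonneg[OF T _ sum_h decreasing_h]) (auto dest: transD[OF trans])
    finally show ?thesis .
  qed
  have summand_nonneg: "Q x * (2 * H x + h x) \<ge> 0" if "x \<in> T" for x
    using nonneg that H_nonneg[of x] H_h_nonneg[OF that] by simp
  have D: "(\<Sum>x\<in>T. \<Sum>y\<in>T. P x * Q y * order_sign r x y) = (\<Sum>x\<in>T. Q x * (2 * H x + h x))"
    unfolding sum_sum_order_sign_eq_prefix_sums[OF T r sum_eq] H_def h_def by simp
  have "(Q x0 - P x0)\<^sup>2 \<le> Q x0 * (2 * H x0 + h x0)"
    using x0 nonneg H_nonneg[of x0] unfolding h_def power2_eq_square
    by (intro mult_mono) auto
  also have "\<dots> \<le> (\<Sum>x\<in>T. Q x * (2 * H x + h x))"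
    using T x0 summand_nonneg by (intro member_le_sum) auto
  finally show ?thesis unfolding D .
qed

lemma Max_nonneg_if_sum_eq_0:
  fixes h :: "'a \<Rightarrow> real"
  assumes "finite T" "T \<noteq> {}" "sum h T = 0"
  shows "Max (h ` T) \<ge> 0"
proof -
  have "sum h T \<le> of_nat (card T) * Max (h ` T)"
    using assms by (intro sum_bounded_above) auto
  then show ?thesis
    using assms by (simp add: zero_le_mult_iff card_gt_0_iff)
qed

theorem propositionA18:
  fixes T :: "'a set" and p q :: "'a pmf" and r :: "('a \<times> 'a) set"
  assumes "finite T"
    and "set_pmf p \<subseteq> T" and "set_pmf q \<subseteq> T"
    and "strict_linear_order_on T r"
    and "\<forall>x\<in>T. \<forall>x'\<in>T. hpq p q x > hpq p q x' \<longrightarrow> (x, x') \<in> r"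
    and "\<forall>x\<in>T. \<forall>x'\<in>T. hpq p q x < hpq p q x' \<longrightarrow> (x', x) \<in> r"
  shows "measure_pmf.prob (R_pmf r p q) {0}
           \<ge> 1/2 + 1/2 * (Max (hpq p q ` T))\<^sup>2"
proof -
  have sum_eq: "sum (pmf p) T = sum (pmf q) T"
    using sum_pmf_eq_1[OF assms(1,2)] sum_pmf_eq_1[OF assms(1,3)] by simp
  have "T \<noteq> {}" using assms(2) set_pmf_not_empty[of p] by auto
  then have "Max (hpq p q ` T) \<in> hpq p q ` T" using assms(1) by simp
  then obtain x0 where x0: "x0 \<in> T" and max: "Max (hpq p q ` T) = hpq p q x0" by blast
  have "hpq p q x0 \<ge> 0"
    using Max_nonneg_if_sum_eq_0[OF assms(1) \<open>T \<noteq> {}\<close>, of "hpq p q"] sum_eq max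
    by (simp add: hpq_def sum_subtractf)
  then have "(pmf q x0 - pmf p x0)\<^sup>2
      \<le> (\<Sum>x\<in>T. \<Sum>y\<in>T. pmf p x * pmf q y * order_sign r x y)"
    using assms(6) x0 \<comment> \<open>assumption 5 is assumption 6 with the variables renamed\<close>
    by (intro square_le_sum_sum_order_sign[OF assms(1,4) _ sum_eq]) (auto simp: hpq_def)
  then show ?thesis
    unfolding prob_R_pmf_0_order_sign[OF assms(1-4)] max hpq_def by simp
qed

end
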